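(* Let $p\ge 1$ and $v\ge 1$ be integers. Let $W_1,\dots,W_p$ be real random variables that are almost surely pairwise distinct, and let $\chi_1,\dots,\chi_p$ be random variables with values in $\{-1,0,1\}$. Let $\mathcal H_0\subseteq\{1,\dots,p\}$ (the true nulls) be such that, conditional on $(W_1,\dots,W_p)$ and on $(\chi_j)_{j\notin\mathcal H_0}$, the variables $(\chi_j)_{j\in\mathcal H_0}$ are jointly independent and each uniformly distributed on $\{-1,+1\}$. Let $V$ be the number of false discoveries of the knockoffs procedure with parameter $v$ (defined in the context). Then $V$ is stochastically dominated by $\mathrm{NB}(v,1/2)$, i.e. $\Pr(V\ge x)\le \Pr(\mathrm{NB}(v,1/2)\ge x)$ for every real $x$.
   Context: Knockoffs procedure with parameter $v$: let $\rho$ be the (a.s. unique) permutation of $\{1,\dots,p\}$ with $W_{\rho(1)}> W_{\rho(2)}>\cdots> W_{\rho(p)}$. Let $j^\star$ be the position of the $v$-th occurrence of $-1$ in the sequence $\chi_{\rho(1)},\dots,\chi_{\rho(p)}$, and $j^\star=p$ if fewer than $v$ entries equal $-1$. The procedure rejects hypothesis $\rho(j)$ for every $j\le j^\star$ with $\chi_{\rho(j)}=+1$. The false discovery number is $V=\#\{j\in\mathcal H_0: j \text{ is rejected}\}$. $\mathrm{NB}(m,q)$ denotes a negative binomial random variable counting the number of successes before the $m$-th failure in a sequence of independent Bernoulli trials with success probability $q$. Motivating setting (where the conditional-independence hypothesis is known to hold): in the linear model $y=X\beta+z$ with $X\in\mathbb R^{n\times p}$ of full column rank $p\le n$, unit-norm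 columns, and $z\sim\mathcal N(0,\sigma^2 I_n)$, one builds $\tilde X\in\mathbb R^{n\times p}$ with $\tilde X^\top\tilde X=X^\top X$ and $X^\top\tilde X=X^\top X-\mathrm{Diag}(s)$ for some $s\ge 0$; $Z_j$ (resp. $\tilde Z_j$) is the largest $\lambda$ at which the $j$-th original (resp. knockoff) coefficient is nonzero on the Lasso path of $y$ on $[X,\tilde X]$; $W_j=\max\{Z_j,\tilde Z_j\}$, $\chi_j=\mathrm{sgn}(Z_j-\tilde Z_j)$, and $\mathcal H_0=\{j:\beta_j=0\}$. *)

theory Defs
  imports "HOL-Probability.Probability"
begin

text \<open>The ordering rho: the indices 1..p listed by decreasing W
  (rho(j) = knockoff_order p W ! (j - 1)).\<close>
definition knockoff_order :: "nat \<Rightarrow> (nat \<Rightarrow> real) \<Rightarrow> nat list" where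
  "knockoff_order p W = sort_key (\<lambda>i. - W i) [1..<Suc p]"

definition knockoff_jstar :: "nat \<Rightarrow> nat \<Rightarrow> (nat \<Rightarrow> real) \<Rightarrow> (nat \<Rightarrow> int) \<Rightarrow> nat" where
  "knockoff_jstar p v W chi =
     (let rho = knockoff_order p W;
          negpos = filter (\<lambda>j. chi (rho ! (j - 1)) = -1) [1..<Suc p]
      in if length negpos < v then p else negpos ! (v - 1))"

definition knockoff_rejected :: "nat \<Rightarrow> nat \<Rightarrow> (nat \<Rightarrow> real) \<Rightarrow> (nat \<Rightarrow> int) \<Rightarrow> nat set" where
  "knockoff_rejected p v W chi =
     {knockoff_order p W ! (j - 1) | j. 1 \<le> j \<and> j \<le> knockoff_jstar p v W chi
        \<and> chi (knockoff_order p W ! (j - 1)) = 1}"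

definition knockoff_V :: "nat \<Rightarrow> nat \<Rightarrow> nat set \<Rightarrow> (nat \<Rightarrow> real) \<Rightarrow> (nat \<Rightarrow> int) \<Rightarrow> nat" where
  "knockoff_V p v H0 W chi = card {j \<in> H0. j \<in> knockoff_rejected p v W chi}"

end

theory Submission
  imports Defs
begin

text \<open>
  Condition on the statistics \<open>W\<close> and on the signs of the non-nulls. Then the order \<open>\<rho>\<close> is fixed,
  the null signs are independent fair coins, and \<open>V\<close> is obtained by walking down \<open>\<rho>\<close>: a null
  with sign \<open>+1\<close> is a false discovery, every \<open>-1\<close> uses up one of the \<open>v\<close> allowed stops, and a
  non-null \<open>-1\<close> can only stop the walk earlier. Induction along \<open>\<rho>\<close> therefore shows that at most
  a fraction \<open>P(NB(v,1/2) \<ge> k)\<close> of the null sign vectors produce \<open>V \<ge> k\<close>, since a null at the head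
  of the list splits the sign vectors into the two halves of the first-step recursion of the
  negative binomial tail. Averaging over the conditioning variables gives the theorem.
\<close>

section \<open>Tail of the negative binomial distribution\<close>

definition neg_binomial_tail :: "nat \<Rightarrow> nat \<Rightarrow> real" where
  "neg_binomial_tail v k = measure_pmf.prob (neg_binomial_pmf v (1/2)) {j. k \<le> j}"

lemma neg_binomial_tail_nonneg: "0 \<le> neg_binomial_tail v k"
  by (simp add: neg_binomial_tail_def)

lemma neg_binomial_tail_0_right [simp]: "neg_binomial_tail v 0 = 1"
  by (simp add: neg_binomial_tail_def measure_pmf.prob_space)

lemma neg_binomial_tail_0_Suc [simp]: "neg_binomial_tail 0 (Suc k) = 0"
  by (simp add: neg_binomial_tail_def measure_return)

text \<open>First-step analysis: a failure leaves \<open>v\<close> failures to wait for, a success one success fewer.\<close>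

lemma neg_binomial_tail_Suc_Suc:
  "neg_binomial_tail (Suc v) (Suc k) = (neg_binomial_tail v (Suc k) + neg_binomial_tail (Suc v) k) / 2"
proof -
  have unfold: "neg_binomial_pmf (Suc v) (1/2) =
      do {b \<leftarrow> bernoulli_pmf (1/2);
          if b then neg_binomial_pmf v (1/2) else map_pmf Suc (neg_binomial_pmf (Suc v) (1/2))}"
    by (rule neg_binomial_pmf_unfold) auto
  have "Suc -` {j. Suc k \<le> j} = {j. k \<le> j}"
    by auto
  then have "ennreal (neg_binomial_tail (Suc v) (Suc k))
      = ennreal (neg_binomial_tail v (Suc k)) / 2 + ennreal (neg_binomial_tail (Suc v) k) / 2"
    unfolding neg_binomial_tail_def measure_pmf.emeasure_eq_measure[symmetric]
    by (subst unfold) (simp add: divide_ennreal_def mult.commute)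
  then show ?thesis
    using neg_binomial_tail_nonneg
    by (simp add: ennreal_plus[symmetric] ennreal_divide_numeral del: ennreal_plus)
qed

lemma neg_binomial_tail_mono: "neg_binomial_tail v k \<le> neg_binomial_tail (Suc v) k"
proof (induction k arbitrary: v)
  case 0
  then show ?case by simp
next
  case (Suc k)
  note tail_mono_k = Suc.IH
  show ?case
  proof (induction v)
    case 0
    then show ?case by (simp add: neg_binomial_tail_nonneg)
  next
    case (Suc v)
    then show ?case
      using tail_mono_k[of "Suc v"] neg_binomial_tail_Suc_Suc[of v k] neg_binomial_tail_Suc_Suc[of "Suc v" k] by simp
  qed
qed

section \<open>Counting null sign vectors\<close>

fun false_discoveries :: "nat \<Rightarrow> nat list \<Rightarrow> (nat \<Rightarrow> int) \<Rightarrow> nat set \<Rightarrow> nat" where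
  "false_discoveries 0 L \<sigma> H = 0"
| "false_discoveries (Suc v) [] \<sigma> H = 0"
| "false_discoveries (Suc v) (i # L) \<sigma> H =
     (if \<sigma> i = -1 then false_discoveries v L \<sigma> H
      else if \<sigma> i = 1 \<and> i \<in> H then Suc (false_discoveries (Suc v) L \<sigma> H)
      else false_discoveries (Suc v) L \<sigma> H)"

lemma false_discoveries_Nil [simp]: "false_discoveries v [] \<sigma> H = 0"
  by (cases v) auto

lemma false_discoveries_cong:
  "(\<And>i. i \<in> set L \<Longrightarrow> \<sigma> i = \<sigma>' i) \<Longrightarrow> false_discoveries v L \<sigma> H = false_discoveries v L \<sigma>' H"
  by (induction v L \<sigma> H rule: false_discoveries.induct) auto

lemma card_PiE_filter_insert:
  assumes "finite N" "i \<notin> N" "\<And>j. finite (T j)"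
  shows "card {s \<in> PiE (insert i N) T. P s} = (\<Sum>a\<in>T i. card {s \<in> PiE N T. P (s(i := a))})"
proof -
  let ?upd = "\<lambda>(a, s). s(i := a)"
  have "{s \<in> PiE (insert i N) T. P s} = ?upd ` (SIGMA a:T i. {s \<in> PiE N T. P (s(i := a))})"
    by (auto simp: PiE_insert_eq)
  moreover have "inj_on ?upd (SIGMA a:T i. {s \<in> PiE N T. P (s(i := a))})"
    by (rule inj_on_subset[OF inj_combinator[OF assms(2)]]) auto
  ultimately show ?thesis
    using assms by (simp add: card_image finite_PiE)
qed

lemma card_sign_vectors_le:
  assumes "finite N"
  shows "real (card {s \<in> PiE N (\<lambda>_. {-1, 1::int}). P s}) \<le> 2 ^ card N"
proof -
  have "card {s \<in> PiE N (\<lambda>_. {-1, 1::int}). P s} \<le> card (PiE N (\<lambda>_. {-1, 1::int}))"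
    using assms by (intro card_mono) (auto simp: finite_PiE)
  then show ?thesis
    using assms by (simp add: card_PiE numeral_2_eq_2 flip: of_nat_le_iff)
qed

lemma card_false_discoveries_ge:
  assumes "distinct L" "N = H \<inter> set L"
  shows "real (card {s \<in> PiE N (\<lambda>_. {-1, 1::int}). k \<le> false_discoveries v L (override_on c s N) H})
           \<le> 2 ^ card N * neg_binomial_tail v k"
  using assms
proof (induction L arbitrary: N v k)
  case Nil
  then show ?case
    using card_sign_vectors_le[of N "\<lambda>_. True"] by (cases k) (simp_all add: neg_binomial_tail_nonneg)
next
  case (Cons i L)
  let ?S = "\<lambda>N v k L. {s \<in> PiE N (\<lambda>_. {-1, 1::int}). k \<le> false_discoveries v L (override_on c s N) H}"
  have "finite N" "distinct L"
    using Cons.prems by auto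
  consider "k = 0" | "v = 0" "k \<noteq> 0" | v' k' where "v = Suc v'" "k = Suc k'"
    by (metis not0_implies_Suc)
  then show ?case
  proof cases
    case 1
    then show ?thesis
      using card_sign_vectors_le[OF \<open>finite N\<close>, of "\<lambda>_. True"] by simp
  next
    case 2
    then show ?thesis by (simp add: neg_binomial_tail_nonneg)
  next
    case (3 v' k')
    show ?thesis
    proof (cases "i \<in> N")
      case False
      then have "i \<notin> H" "N = H \<inter> set L"
        using Cons.prems by auto
      note IH = Cons.IH[OF \<open>distinct L\<close> this(2)]
      show ?thesis
      proof (cases "c i = -1")
        case True
        then have "?S N v k (i # L) = ?S N v' k L"
          using \<open>i \<notin> N\<close> 3 by (simp add: override_on_def)
        then have "real (card (?S N v k (i # L))) \<le> 2 ^ card N * neg_binomial_tail v' k"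
          using IH[where v = v' and k = k] by simp
        also have "\<dots> \<le> 2 ^ card N * neg_binomial_tail v k"
          using neg_binomial_tail_mono[of v' k] 3 by simp
        finally show ?thesis .
      next
        case False
        then have "?S N v k (i # L) = ?S N v k L"
          using \<open>i \<notin> N\<close> 3 \<open>i \<notin> H\<close> by (simp add: override_on_def)
        then show ?thesis using IH by simp
      qed
    next
      case True
      let ?N = "N - {i}"
      have "i \<notin> set L" "i \<in> H" "?N = H \<inter> set L"
        using Cons.prems True by auto
      note IH = Cons.IH[OF \<open>distinct L\<close> this(3)]
      have override_upd: "false_discoveries w L (override_on c (s(i := a)) N) H
          = false_discoveries w L (override_on c s ?N) H" for w s a
        by (rule false_discoveries_cong) (use \<open>i \<notin> set L\<close> in \<open>auto simp: override_on_def\<close>)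
      have override_at: "override_on c (s(i := a)) N i = a" for s a
        using True by (simp add: override_on_def)
      have "card (?S N v k (i # L)) = (\<Sum>a\<in>{-1, 1}.
          card {s \<in> PiE ?N (\<lambda>_. {-1, 1::int}). k \<le> false_discoveries v (i # L) (override_on c (s(i := a)) N) H})"
        using card_PiE_filter_insert[of ?N i "\<lambda>_. {-1, 1::int}"] \<open>finite N\<close> True by (simp add: insert_absorb)
      also have "\<dots> = card (?S ?N v' k L) + card (?S ?N v k' L)"
        using 3 \<open>i \<in> H\<close> by (simp add: override_upd override_at)
      also have "real \<dots> \<le> 2 ^ card ?N * neg_binomial_tail v' k + 2 ^ card ?N * neg_binomial_tail v k'"
        using IH[where v = v' and k = k] IH[where v = v and k = k'] by simp
      also have "\<dots> = 2 ^ card ?N * (neg_binomial_tail v' k + neg_binomial_tail v k')"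
        by (simp add: algebra_simps)
      also have "\<dots> = 2 ^ card N * neg_binomial_tail v k"
        using 3 card.remove[OF \<open>finite N\<close> True] neg_binomial_tail_Suc_Suc[of v' k'] by simp
      finally show ?thesis by simp
    qed
  qed
qed

section \<open>The knockoff procedure as a list recursion\<close>

definition knockoff_stop :: "nat \<Rightarrow> nat list \<Rightarrow> (nat \<Rightarrow> int) \<Rightarrow> nat" where
  "knockoff_stop v L \<sigma> =
     (let negpos = filter (\<lambda>j. \<sigma> (L ! (j - 1)) = -1) [1..<Suc (length L)]
      in if length negpos < v then length L else negpos ! (v - 1))"

lemma knockoff_jstar_eq_stop:
  "knockoff_jstar p v W \<sigma> = knockoff_stop v (knockoff_order p W) \<sigma>"
  by (simp add: knockoff_jstar_def knockoff_stop_def knockoff_order_def)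

lemma filter_neg_positions_Cons:
  "filter (\<lambda>j. \<sigma> ((i # L) ! (j - 1)) = -1) [1..<Suc (Suc (length L))]
   = (if \<sigma> i = -1 then [1] else []) @ map Suc (filter (\<lambda>j. \<sigma> (L ! (j - 1)) = -1) [1..<Suc (length L)])"
proof -
  have "[1..<Suc (Suc n)] = 1 # map Suc [1..<Suc n]" for n
    by (simp add: upt_conv_Cons map_Suc_upt del: upt_Suc)
  moreover have "filter ((\<lambda>j. \<sigma> ((i # L) ! (j - 1)) = -1) \<circ> Suc) [1..<Suc (length L)]
      = filter (\<lambda>j. \<sigma> (L ! (j - 1)) = -1) [1..<Suc (length L)]"
    by (rule filter_cong) (auto simp: nth_Cons' simp del: upt_Suc)
  ultimately show ?thesis
    by (simp add: filter_map del: upt_Suc)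
qed

lemma knockoff_stop_Cons:
  "knockoff_stop (Suc v) (i # L) \<sigma> =
     (if \<sigma> i = -1 then (if v = 0 then 1 else Suc (knockoff_stop v L \<sigma>))
      else Suc (knockoff_stop (Suc v) L \<sigma>))"
  unfolding knockoff_stop_def Let_def length_Cons filter_neg_positions_Cons
  by (cases v) (auto simp: nth_Cons')

lemma knockoff_stop_le_length:
  assumes "1 \<le> v"
  shows "knockoff_stop v L \<sigma> \<le> length L"
proof -
  let ?negpos = "filter (\<lambda>j. \<sigma> (L ! (j - 1)) = -1) [1..<Suc (length L)]"
  have "?negpos ! (v - 1) \<in> set ?negpos" if "\<not> length ?negpos < v"
    using that assms by (intro nth_mem) auto
  then show ?thesis
    unfolding knockoff_stop_def Let_def by (auto simp del: upt_Suc)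
qed

lemma false_discoveries_eq_length_filter:
  "1 \<le> v \<Longrightarrow>
   false_discoveries v L \<sigma> H = length (filter (\<lambda>i. i \<in> H \<and> \<sigma> i = 1) (take (knockoff_stop v L \<sigma>) L))"
proof (induction L arbitrary: v)
  case (Cons i L)
  then obtain v' where "v = Suc v'"
    using not0_implies_Suc by fastforce
  then show ?case
    using Cons.IH[of v'] Cons.IH[of v] Cons.prems
    by (cases "\<sigma> i = -1"; cases "v' = 0") (simp_all add: knockoff_stop_Cons)
qed simp

lemma insort_key_cong:
  "(\<And>y. y \<in> set ys \<Longrightarrow> f x \<le> f y \<longleftrightarrow> g x \<le> g y) \<Longrightarrow> insort_key f x ys = insort_key g x ys"
  by (induction ys) auto

lemma sort_key_cong_order:
  fixes f g :: "'a \<Rightarrow> 'b::linorder"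
  assumes "\<And>x y. x \<in> set xs \<Longrightarrow> y \<in> set xs \<Longrightarrow> f x \<le> f y \<longleftrightarrow> g x \<le> g y"
  shows "sort_key f xs = sort_key g xs"
  using assms
proof (induction xs)
  case (Cons x xs)
  then have "sort_key f xs = sort_key g xs"
    by simp
  moreover have "insort_key f x (sort_key g xs) = insort_key g x (sort_key g xs)"
    by (rule insort_key_cong) (simp add: Cons.prems)
  ultimately show ?case
    by simp
qed simp

lemma knockoff_order_cong:
  "(\<And>i j. i \<in> {1..p} \<Longrightarrow> j \<in> {1..p} \<Longrightarrow> W i \<le> W j \<longleftrightarrow> W' i \<le> W' j)
   \<Longrightarrow> knockoff_order p W = knockoff_order p W'"
  unfolding knockoff_order_def by (rule sort_key_cong_order) auto

lemma distinct_knockoff_order: "distinct (knockoff_order p W)"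
  by (simp add: knockoff_order_def)

lemma set_knockoff_order [simp]: "set (knockoff_order p W) = {1..p}"
  by (auto simp: knockoff_order_def)

lemma knockoff_rejected_eq:
  assumes "1 \<le> v"
  shows "knockoff_rejected p v W \<sigma> =
    {i \<in> set (take (knockoff_stop v (knockoff_order p W) \<sigma>) (knockoff_order p W)). \<sigma> i = 1}"
proof -
  define L where "L = knockoff_order p W"
  define J where "J = knockoff_stop v L \<sigma>"
  have "J \<le> length L"
    unfolding J_def by (rule knockoff_stop_le_length[OF assms(1)])
  have "knockoff_rejected p v W \<sigma> = {i \<in> {L ! (j - 1) |j. 1 \<le> j \<and> j \<le> J}. \<sigma> i = 1}"
    unfolding knockoff_rejected_def knockoff_jstar_eq_stop J_def L_def by auto
  also have "{L ! (j - 1) |j. 1 \<le> j \<and> j \<le> J} = (\<lambda>j. L ! (j - 1)) ` Suc ` {..<J}"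
    unfolding image_Suc_lessThan by auto
  also have "\<dots> = set (take J L)"
    using nth_image[OF \<open>J \<le> length L\<close>] by (simp only: image_image diff_Suc_1 lessThan_atLeast0)
  finally show ?thesis
    unfolding J_def L_def .
qed

lemma knockoff_V_eq_false_discoveries:
  assumes "1 \<le> v"
  shows "knockoff_V p v H W \<sigma> = false_discoveries v (knockoff_order p W) \<sigma> H"
proof -
  define L where "L = knockoff_order p W"
  let ?false = "filter (\<lambda>i. i \<in> H \<and> \<sigma> i = 1) (take (knockoff_stop v L \<sigma>) L)"
  have "{j \<in> H. j \<in> knockoff_rejected p v W \<sigma>} = set ?false"
    unfolding knockoff_rejected_eq[OF assms] L_def by auto
  moreover have "distinct ?false"
    unfolding L_def by (simp add: distinct_knockoff_order)
  ultimately have "card {j \<in> H. j \<in> knockoff_rejected p v W \<sigma>} = length ?false"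
    by (metis distinct_card)
  then show ?thesis
    unfolding knockoff_V_def false_discoveries_eq_length_filter[OF assms] L_def .
qed

lemma knockoff_V_eq_restrict:
  assumes "1 \<le> v" "H \<subseteq> {1..p}"
  shows "knockoff_V p v H W \<sigma> = false_discoveries v (knockoff_order p (restrict W {1..p}))
           (override_on (restrict \<sigma> ({1..p} - H)) (restrict \<sigma> H) H) H"
proof -
  have "knockoff_order p (restrict W {1..p}) = knockoff_order p W"
    by (rule knockoff_order_cong) simp
  moreover have "false_discoveries v (knockoff_order p W) \<sigma> H
      = false_discoveries v (knockoff_order p W) (override_on (restrict \<sigma> ({1..p} - H)) (restrict \<sigma> H) H) H"
    using assms(2) by (intro false_discoveries_cong) (auto simp: override_on_def)
  ultimately show ?thesis
    using knockoff_V_eq_false_discoveries[OF assms(1)] by simp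
qed

section \<open>Measurability\<close>

lemma measurable_count_space_if_constant_on_cells:
  assumes "countable C" "C \<subseteq> sets M" "space M \<subseteq> \<Union>C"
    and "\<And>c x y. c \<in> C \<Longrightarrow> x \<in> c \<Longrightarrow> y \<in> c \<Longrightarrow> f x = f y"
  shows "f \<in> M \<rightarrow>\<^sub>M count_space UNIV"
proof (rule measurableI)
  fix A
  have "f -` A \<inter> space M = \<Union>{c \<in> C. \<exists>x\<in>c. f x \<in> A}"
  proof (intro equalityI subsetI)
    fix y assume "y \<in> f -` A \<inter> space M"
    then show "y \<in> \<Union>{c \<in> C. \<exists>x\<in>c. f x \<in> A}"
      using assms(3) by blast
  next
    fix y assume "y \<in> \<Union>{c \<in> C. \<exists>x\<in>c. f x \<in> A}"
    then obtain c x where "c \<in> C" "y \<in> c" "x \<in> c" "f x \<in> A"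
      by blast
    moreover have "c \<subseteq> space M"
      using assms(2) \<open>c \<in> C\<close> sets.sets_into_space by blast
    ultimately show "y \<in> f -` A \<inter> space M"
      using assms(4)[of c x y] by auto
  qed
  also have "\<dots> \<in> sets M"
    using assms(1,2) by (intro sets.countable_Union) auto
  finally show "f -` A \<inter> space M \<in> sets M" .
qed simp

text \<open>The order only depends on finitely many comparisons, so the cells on which all comparisons
  and all coordinates of the second component are fixed are countably many measurable sets.\<close>

lemma measurable_knockoff_order_snd:
  fixes F :: "nat list \<Rightarrow> (nat \<Rightarrow> 'c::countable) \<Rightarrow> 'b"
  assumes "finite N"
  shows "(\<lambda>y. F (knockoff_order p (fst y)) (snd y))
           \<in> (PiM {1..p} (\<lambda>_. borel) \<Otimes>\<^sub>M PiM N (\<lambda>_. count_space UNIV)) \<rightarrow>\<^sub>M count_space UNIV"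
proof -
  let ?MM = "PiM {1..p} (\<lambda>_. borel :: real measure) \<Otimes>\<^sub>M PiM N (\<lambda>_. count_space (UNIV :: 'c set))"
  let ?cell = "\<lambda>(P, c). {y \<in> space ?MM.
      (\<forall>i\<in>{1..p}. \<forall>j\<in>{1..p}. fst y i \<le> fst y j \<longleftrightarrow> (i, j) \<in> P) \<and> (\<forall>j\<in>N. snd y j = c j)}"
  have "(\<lambda>y. fst y i) \<in> borel_measurable ?MM" if "i \<in> {1..p}" for i
    using that by (intro measurable_compose[OF measurable_fst measurable_component_singleton])
  then have "Measurable.pred ?MM (\<lambda>y. fst y i \<le> fst y j)" if "i \<in> {1..p}" "j \<in> {1..p}" for i j
    using that by (simp add: pred_def borel_measurable_le)
  then have comparison: "Measurable.pred ?MM (\<lambda>y. fst y i \<le> fst y j \<longleftrightarrow> (i, j) \<in> P)"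
    if "i \<in> {1..p}" "j \<in> {1..p}" for i j P
    using that by (cases "(i, j) \<in> P") (simp_all add: pred_intros_logic(2))
  have "(\<lambda>y. snd y j) \<in> ?MM \<rightarrow>\<^sub>M count_space UNIV" if "j \<in> N" for j
    using that by (intro measurable_compose[OF measurable_snd measurable_component_singleton])
  then have coordinate: "Measurable.pred ?MM (\<lambda>y. snd y j = c j)" if "j \<in> N" for j c
    using that by measurable
  show ?thesis
  proof (rule measurable_count_space_if_constant_on_cells)
    show "countable (?cell ` (Pow ({1..p} \<times> {1..p}) \<times> PiE N (\<lambda>_. UNIV)))"
      using assms by (intro countable_image countable_SIGMA countable_PiE) (auto intro: countable_finite)
    have "Measurable.pred ?MM (\<lambda>y. (\<forall>i\<in>{1..p}. \<forall>j\<in>{1..p}. fst y i \<le> fst y j \<longleftrightarrow> (i, j) \<in> P)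
        \<and> (\<forall>j\<in>N. snd y j = d j))" for P d
      using assms comparison coordinate by (intro pred_intros_logic(3) pred_intros_finite(3)) auto
    then show "?cell ` (Pow ({1..p} \<times> {1..p}) \<times> PiE N (\<lambda>_. UNIV)) \<subseteq> sets ?MM"
      by (auto simp: pred_def)
  next
    show "space ?MM \<subseteq> \<Union> (?cell ` (Pow ({1..p} \<times> {1..p}) \<times> PiE N (\<lambda>_. UNIV)))"
    proof
      fix y assume "y \<in> space ?MM"
      then show "y \<in> \<Union> (?cell ` (Pow ({1..p} \<times> {1..p}) \<times> PiE N (\<lambda>_. UNIV)))"
        by (intro UN_I[of "({(i, j) \<in> {1..p} \<times> {1..p}. fst y i \<le> fst y j}, snd y)"])
           (auto simp: space_pair_measure space_PiM)
    qed
  next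
    fix c y y' assume "c \<in> ?cell ` (Pow ({1..p} \<times> {1..p}) \<times> PiE N (\<lambda>_. UNIV))" "y \<in> c" "y' \<in> c"
    then obtain P d where y: "y \<in> ?cell (P, d)" and y': "y' \<in> ?cell (P, d)"
      by blast
    have "knockoff_order p (fst y) = knockoff_order p (fst y')"
      using y y' by (intro knockoff_order_cong) auto
    moreover have "snd y = snd y'"
      using y y' by (intro PiE_ext[of _ N "\<lambda>_. UNIV"]) (auto simp: space_pair_measure space_PiM)
    ultimately show "F (knockoff_order p (fst y)) (snd y) = F (knockoff_order p (fst y')) (snd y')"
      by simp
  qed
qed

section \<open>Conditionally uniform signs\<close>

lemma (in prob_space) prob_in_eq_1_if_uniform:
  assumes "finite S" "S \<noteq> {}"
    and "\<And>s. s \<in> S \<Longrightarrow> {\<omega> \<in> space M. X \<omega> = s} \<in> events"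
    and "\<And>s. s \<in> S \<Longrightarrow> prob {\<omega> \<in> space M. X \<omega> = s} = 1 / card S"
  shows "prob {\<omega> \<in> space M. X \<omega> \<in> S} = 1"
proof -
  have "{\<omega> \<in> space M. X \<omega> \<in> S} = (\<Union>s\<in>S. {\<omega> \<in> space M. X \<omega> = s})"
    by blast
  also have "prob \<dots> = (\<Sum>s\<in>S. prob {\<omega> \<in> space M. X \<omega> = s})"
    using assms(1,3) by (intro finite_measure_finite_Union) (auto simp: disjoint_family_on_def)
  also have "\<dots> = 1"
    using assms(1,2,4) by simp
  finally show ?thesis .
qed

lemma (in prob_space) prob_le_if_conditionally_uniform:
  fixes X :: "'a \<Rightarrow> 'b" and Y :: "'a \<Rightarrow> 'c" and c :: real
  assumes "finite S" "S \<noteq> {}" and Y: "Y \<in> M \<rightarrow>\<^sub>M N"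
    and X: "\<And>s. s \<in> S \<Longrightarrow> {\<omega> \<in> space M. X \<omega> = s} \<in> events"
    and uniform: "\<And>s C. s \<in> S \<Longrightarrow> C \<in> sets N \<Longrightarrow>
      prob {\<omega> \<in> space M. X \<omega> = s \<and> Y \<omega> \<in> C} = prob {\<omega> \<in> space M. Y \<omega> \<in> C} / card S"
    and B: "\<And>s. s \<in> S \<Longrightarrow> B s \<in> sets N"
    and bound: "\<And>y. y \<in> space N \<Longrightarrow> real (card {s \<in> S. y \<in> B s}) \<le> card S * c"
    and A: "A \<subseteq> space M" "\<And>\<omega>. \<omega> \<in> A \<Longrightarrow> X \<omega> \<in> S \<Longrightarrow> Y \<omega> \<in> B (X \<omega>)"
  shows "prob A \<le> c"
proof -
  define E where "E s = {\<omega> \<in> space M. X \<omega> = s \<and> Y \<omega> \<in> B s}" for s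
  define F where "F s = {\<omega> \<in> space M. Y \<omega> \<in> B s}" for s
  have F_events: "F s \<in> events" if "s \<in> S" for s
    using measurable_sets[OF Y B[OF that]] unfolding F_def by (simp add: Int_def conj_commute)
  have E_events: "E s \<in> events" if "s \<in> S" for s
  proof -
    have "E s = {\<omega> \<in> space M. X \<omega> = s} \<inter> F s"
      by (auto simp: E_def F_def)
    then show ?thesis using X F_events that by simp
  qed
  have "{\<omega> \<in> space M. X \<omega> \<in> S} = (\<Union>s\<in>S. {\<omega> \<in> space M. X \<omega> = s})"
    by blast
  then have X_in_S: "{\<omega> \<in> space M. X \<omega> \<in> S} \<in> events"
    using X assms(1) by auto
  have X_notin_S: "{\<omega> \<in> space M. X \<omega> \<notin> S} = space M - {\<omega> \<in> space M. X \<omega> \<in> S}"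
    by blast
  have X_notin_S_event: "{\<omega> \<in> space M. X \<omega> \<notin> S} \<in> events"
    unfolding X_notin_S using X_in_S by (rule sets.compl_sets)
  have null: "prob {\<omega> \<in> space M. X \<omega> \<notin> S} = 0"
  proof -
    have "{\<omega> \<in> space M. X \<omega> = s \<and> Y \<omega> \<in> space N} = {\<omega> \<in> space M. X \<omega> = s}"
      and "{\<omega> \<in> space M. Y \<omega> \<in> space N} = space M" for s
      using measurable_space[OF Y] by auto
    then have "prob {\<omega> \<in> space M. X \<omega> = s} = 1 / card S" if "s \<in> S" for s
      using uniform[OF that sets.top] by (simp add: prob_space)
    with assms(1,2) X have "prob {\<omega> \<in> space M. X \<omega> \<in> S} = 1"
      by (rule prob_in_eq_1_if_uniform)
    then show ?thesis
      using X_in_S by (simp add: X_notin_S prob_compl)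
  qed
  have count: "(\<Sum>s\<in>S. indicator (F s) \<omega>) = real (card {s \<in> S. Y \<omega> \<in> B s})" if "\<omega> \<in> space M" for \<omega>
    using that assms(1) by (simp add: F_def indicator_def sum.If_cases Int_def)
  have sum_F: "(\<Sum>s\<in>S. prob (F s)) \<le> card S * c"
  proof -
    have "(\<Sum>s\<in>S. prob (F s)) = (\<integral>\<omega>. (\<Sum>s\<in>S. indicator (F s) \<omega>) \<partial>M)"
      using F_events by (simp add: Int_absorb2 emeasure_eq_measure)
    also have "\<dots> \<le> (\<integral>\<omega>. card S * c \<partial>M)"
      using F_events count bound measurable_space[OF Y]
      by (intro integral_mono) (auto simp: emeasure_eq_measure)
    finally show ?thesis
      by (simp add: prob_space)
  qed
  have "A \<subseteq> (\<Union>s\<in>S. E s) \<union> {\<omega> \<in> space M. X \<omega> \<notin> S}"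
    using A by (auto simp: E_def)
  moreover have "(\<Union>s\<in>S. E s) \<union> {\<omega> \<in> space M. X \<omega> \<notin> S} \<in> events"
    by (intro sets.Un sets.finite_UN assms(1) E_events X_notin_S_event)
  ultimately have "prob A \<le> prob ((\<Union>s\<in>S. E s) \<union> {\<omega> \<in> space M. X \<omega> \<notin> S})"
    by (rule finite_measure_mono)
  also have "\<dots> \<le> (\<Sum>s\<in>S. prob (E s)) + prob {\<omega> \<in> space M. X \<omega> \<notin> S}"
    by (intro order_trans[OF measure_Un_le] add_mono finite_measure_subadditive_finite sets.finite_UN
        assms(1) E_events X_notin_S_event image_subsetI order_refl)
  also have "\<dots> = (\<Sum>s\<in>S. prob (F s)) / card S"
    using null uniform B by (simp add: E_def F_def sum_divide_distrib)
  also have "\<dots> \<le> c"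
    using sum_F assms(1,2) by (simp add: divide_le_eq mult.commute)
  finally show ?thesis .
qed

theorem lemma2:
  fixes M :: "'a measure" and p v :: nat and H0 :: "nat set"
    and W :: "nat \<Rightarrow> 'a \<Rightarrow> real" and chi :: "nat \<Rightarrow> 'a \<Rightarrow> int"
  assumes "prob_space M"
    and "p \<ge> 1" and "v \<ge> 1"
    and W_meas: "\<And>j. j \<in> {1..p} \<Longrightarrow> W j \<in> borel_measurable M"
    and chi_meas: "\<And>j. j \<in> {1..p} \<Longrightarrow> chi j \<in> measurable M (count_space UNIV)"
    and chi_vals: "\<And>j \<omega>. j \<in> {1..p} \<Longrightarrow> \<omega> \<in> space M \<Longrightarrow> chi j \<omega> \<in> {-1, 0, 1}"
    and W_distinct: "AE \<omega> in M. \<forall>i\<in>{1..p}. \<forall>j\<in>{1..p}. i \<noteq> j \<longrightarrow> W i \<omega> \<noteq> W j \<omega>"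
    and H0_sub: "H0 \<subseteq> {1..p}"
    and cond_null:
      "\<And>B s. B \<in> sets (PiM {1..p} (\<lambda>_. borel) \<Otimes>\<^sub>M PiM ({1..p} - H0) (\<lambda>_. count_space UNIV))
         \<Longrightarrow> s \<in> H0 \<rightarrow> {-1, 1} \<Longrightarrow>
         measure M {\<omega> \<in> space M. (\<forall>j\<in>H0. chi j \<omega> = s j) \<and>
              ((\<lambda>j\<in>{1..p}. W j \<omega>), (\<lambda>j\<in>{1..p} - H0. chi j \<omega>)) \<in> B}
         = measure M {\<omega> \<in> space M.
              ((\<lambda>j\<in>{1..p}. W j \<omega>), (\<lambda>j\<in>{1..p} - H0. chi j \<omega>)) \<in> B} / 2 ^ card H0"
  shows "\<forall>x::real.
           measure M {\<omega> \<in> space M. real (knockoff_V p v H0 (\<lambda>j. W j \<omega>) (\<lambda>j. chi j \<omega>)) \<ge> x}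
           \<le> measure_pmf.prob (neg_binomial_pmf v (1/2)) {k. real k \<ge> x}"
proof
  fix x :: real
  interpret prob_space M by fact
  define k where "k = nat \<lceil>x\<rceil>"
  define MM where "MM = PiM {1..p} (\<lambda>_. borel :: real measure) \<Otimes>\<^sub>M PiM ({1..p} - H0) (\<lambda>_. count_space (UNIV :: int set))"
  define Y where "Y \<omega> = ((\<lambda>j\<in>{1..p}. W j \<omega>), (\<lambda>j\<in>{1..p} - H0. chi j \<omega>))" for \<omega>
  define B where "B s = {y :: (nat \<Rightarrow> real) \<times> (nat \<Rightarrow> int) \<in> space MM.
    k \<le> false_discoveries v (knockoff_order p (fst y)) (override_on (snd y) s H0) H0}" for s
  let ?S = "PiE H0 (\<lambda>_. {-1, 1::int})"
  have "finite H0"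
    using H0_sub finite_subset by blast
  have Y_meas: "Y \<in> M \<rightarrow>\<^sub>M MM"
    unfolding Y_def MM_def using W_meas chi_meas by (intro measurable_Pair measurable_restrict) auto
  have X_eq: "restrict (\<lambda>j. chi j \<omega>) H0 = s \<longleftrightarrow> (\<forall>j\<in>H0. chi j \<omega> = s j)" if "s \<in> ?S" for s \<omega>
    using that by (auto simp: PiE_iff extensional_def)
  have "prob {\<omega> \<in> space M. x \<le> real (knockoff_V p v H0 (\<lambda>j. W j \<omega>) (\<lambda>j. chi j \<omega>))}
      \<le> neg_binomial_tail v k"
  proof (rule prob_le_if_conditionally_uniform[where X = "\<lambda>\<omega>. restrict (\<lambda>j. chi j \<omega>) H0" and B = B])
    show "finite ?S" "?S \<noteq> {}"
      using \<open>finite H0\<close> by (auto simp: finite_PiE PiE_eq_empty_iff)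
    show "Y \<in> M \<rightarrow>\<^sub>M MM"
      by (fact Y_meas)
    show "{\<omega> \<in> space M. restrict (\<lambda>j. chi j \<omega>) H0 = s} \<in> events" if "s \<in> ?S" for s
      using H0_sub chi_meas \<open>finite H0\<close>
      by (simp only: X_eq[OF that]) (intro sets.sets_Collect_finite_All predE pred_count_space_const1, auto)
    show "prob {\<omega> \<in> space M. restrict (\<lambda>j. chi j \<omega>) H0 = s \<and> Y \<omega> \<in> C}
        = prob {\<omega> \<in> space M. Y \<omega> \<in> C} / card ?S" if "s \<in> ?S" "C \<in> sets MM" for s C
      using cond_null[of C s] that \<open>finite H0\<close>
      by (simp add: X_eq MM_def Y_def card_PiE numeral_2_eq_2 PiE_iff)
    show "B s \<in> sets MM" for s
      unfolding B_def MM_def using \<open>finite H0\<close>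
      by (intro predE measurable_knockoff_order_snd) auto
    show "real (card {s \<in> ?S. y \<in> B s}) \<le> card ?S * neg_binomial_tail v k" if "y \<in> space MM" for y
      using card_false_discoveries_ge[of "knockoff_order p (fst y)" H0 H0] H0_sub that \<open>finite H0\<close>
      by (auto simp: B_def distinct_knockoff_order card_PiE numeral_2_eq_2 Int_absorb2)
    show "{\<omega> \<in> space M. x \<le> real (knockoff_V p v H0 (\<lambda>j. W j \<omega>) (\<lambda>j. chi j \<omega>))} \<subseteq> space M"
      by blast
    fix \<omega> assume "\<omega> \<in> {\<omega> \<in> space M. x \<le> real (knockoff_V p v H0 (\<lambda>j. W j \<omega>) (\<lambda>j. chi j \<omega>))}"
    then show "Y \<omega> \<in> B (restrict (\<lambda>j. chi j \<omega>) H0)"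
      using measurable_space[OF Y_meas] knockoff_V_eq_restrict[OF \<open>1 \<le> v\<close> H0_sub]
      by (auto simp: B_def Y_def k_def nat_le_iff ceiling_le_iff)
  qed
  then show "measure M {\<omega> \<in> space M. real (knockoff_V p v H0 (\<lambda>j. W j \<omega>) (\<lambda>j. chi j \<omega>)) \<ge> x}
      \<le> measure_pmf.prob (neg_binomial_pmf v (1/2)) {j. real j \<ge> x}"
    by (simp add: neg_binomial_tail_def k_def nat_le_iff ceiling_le_iff)
qed

end
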